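(* Let $(Y,\tau_Y)$ be a locally convex vector lattice and $X\subset Y$ a sublattice. Let $K=(K(t))_{t\geq0}$ be a family of operators $X\to Y$ and let $S=(S(t))_{t\geq0}$ be a $K$-convex monotone semigroup on $X$ with $S(t)0\geq0$ for all $t\geq0$. Then for all $t\geq0$ and $u,v\in X$, $$|S(t)u-v|\leq|K(t)u-v|+|K(t)(-u)+v|.$$ In particular, $p(S(t)u-v)\leq p(K(t)u-v)+p(K(t)(-u)+v)$ for all $t\geq0$, $u,v\in X$ and every lattice seminorm $p\colon Y\to[0,\infty)$.
   Context: $|u|=u\vee(-u)$. A lattice seminorm is a seminorm $p$ on $Y$ with $p(u)\leq p(v)$ whenever $|u|\leq|v|$. A monotone semigroup on $X$ is a family $S=(S(t))_{t\geq0}$ of maps $X\to X$ with $S(0)u=u$, $S(t)S(s)u=S(t+s)u$ for all $s,t\geq0$, $u\in X$, and each $S(t)$ monotone ($u\leq v\Rightarrow S(t)u\leq S(t)v$). $S$ is $K$-convex if $S(t)(\lambda u+(1-\lambda)v)\leq\lambda S(t)u+(1-\lambda)K(t)v$ for all $t\geq0$, $u,v\in X$, $\lambda\in[0,1]$. *)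

theory Defs
  imports Main "HOL-Analysis.Analysis"
begin

definition vabs :: "'y::{ordered_real_vector,lattice} \<Rightarrow> 'y" where
  "vabs u = sup u (- u)"

definition sublattice :: "'y::{ordered_real_vector,lattice} set \<Rightarrow> bool" where
  "sublattice X \<longleftrightarrow> subspace X \<and> (\<forall>u\<in>X. \<forall>v\<in>X. sup u v \<in> X \<and> inf u v \<in> X)"

definition seminorm :: "('y::real_vector \<Rightarrow> real) \<Rightarrow> bool" where
  "seminorm p \<longleftrightarrow> (\<forall>u. 0 \<le> p u) \<and> (\<forall>u v. p (u + v) \<le> p u + p v)
     \<and> (\<forall>c u. p (c *\<^sub>R u) = \<bar>c\<bar> * p u)"

definition lattice_seminorm :: "('y::{ordered_real_vector,lattice} \<Rightarrow> real) \<Rightarrow> bool" where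
  "lattice_seminorm p \<longleftrightarrow> seminorm p \<and> (\<forall>u v. vabs u \<le> vabs v \<longrightarrow> p u \<le> p v)"

definition monotone_semigroup :: "'y::{ordered_real_vector,lattice} set \<Rightarrow> (real \<Rightarrow> 'y \<Rightarrow> 'y) \<Rightarrow> bool" where
  "monotone_semigroup X S \<longleftrightarrow>
     (\<forall>t\<ge>0. \<forall>u\<in>X. S t u \<in> X) \<and>
     (\<forall>u\<in>X. S 0 u = u) \<and>
     (\<forall>s\<ge>0. \<forall>t\<ge>0. \<forall>u\<in>X. S t (S s u) = S (t + s) u) \<and>
     (\<forall>t\<ge>0. \<forall>u\<in>X. \<forall>v\<in>X. u \<le> v \<longrightarrow> S t u \<le> S t v)"

definition K_convex :: "'y::{ordered_real_vector,lattice} set \<Rightarrow> (real \<Rightarrow> 'y \<Rightarrow> 'y) \<Rightarrow> (real \<Rightarrow> 'y \<Rightarrow> 'y) \<Rightarrow> bool" where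
  "K_convex X K S \<longleftrightarrow>
     (\<forall>t\<ge>0. \<forall>u\<in>X. \<forall>v\<in>X. \<forall>lam::real. 0 \<le> lam \<and> lam \<le> 1 \<longrightarrow>
        S t (lam *\<^sub>R u + (1 - lam) *\<^sub>R v) \<le> lam *\<^sub>R S t u + (1 - lam) *\<^sub>R K t v)"

end

theory Submission
  imports Defs
begin

text \<open>Taking \<open>\<lambda> = 0\<close> in the \<open>K\<close>-convexity inequality gives \<open>S(t)u \<le> K(t)u\<close>; taking
  \<open>\<lambda> = 1/2\<close>, \<open>v = -u\<close> gives \<open>0 \<le> S(t)0 \<le> (S(t)u + K(t)(-u))/2\<close>, i.e. \<open>-S(t)u \<le> K(t)(-u)\<close>.
  So \<open>S(t)u - v\<close> is bounded above by \<open>K(t)u - v\<close> and below by \<open>-(K(t)(-u) + v)\<close>, and the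
  modulus of anything squeezed between \<open>-b\<close> and \<open>a\<close> is at most \<open>|a| + |b|\<close>.\<close>

lemma vabs_ge: "x \<le> vabs x" "- x \<le> vabs x"
  by (auto simp: vabs_def)

lemma vabs_le: "x \<le> w \<Longrightarrow> - x \<le> w \<Longrightarrow> vabs x \<le> w"
  by (simp add: vabs_def)

lemma vabs_nonneg: "0 \<le> vabs (x::'y::{ordered_real_vector,lattice})"
proof -
  have "x + - x \<le> vabs x + vabs x"
    by (intro add_mono vabs_ge)
  then have "0 \<le> (2::real) *\<^sub>R vabs x"
    by (simp add: scaleR_2)
  then show ?thesis
    by (simp add: zero_le_scaleR_iff)
qed

lemma vabs_of_nonneg:
  assumes "0 \<le> (x::'y::{ordered_real_vector,lattice})"
  shows "vabs x = x"
proof -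
  have "- x \<le> x"
    using assms order_trans[of "- x" 0 x] by simp
  then show ?thesis
    by (simp add: vabs_def sup_absorb1)
qed

lemma vabs_vabs [simp]: "vabs (vabs x) = vabs (x::'y::{ordered_real_vector,lattice})"
  by (rule vabs_of_nonneg[OF vabs_nonneg])

lemma vabs_diff_le_of_bounds:
  fixes x a b v :: "'y::{ordered_real_vector,lattice}"
  assumes "x \<le> a" and "- x \<le> b"
  shows "vabs (x - v) \<le> vabs (a - v) + vabs (b + v)"
proof (rule vabs_le)
  have "x - v \<le> a - v"
    using assms(1) by (rule diff_right_mono)
  also have "\<dots> \<le> vabs (a - v) + vabs (b + v)"
    using add_mono[OF vabs_ge(1) vabs_nonneg] by simp
  finally show "x - v \<le> vabs (a - v) + vabs (b + v)" .
next
  have "- (x - v) \<le> b + v"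
    using add_right_mono[OF assms(2), of v] by simp
  also have "\<dots> \<le> vabs (a - v) + vabs (b + v)"
    using add_mono[OF vabs_nonneg vabs_ge(1)] by simp
  finally show "- (x - v) \<le> vabs (a - v) + vabs (b + v)" .
qed

lemma lattice_seminorm_vabs:
  assumes "lattice_seminorm p"
  shows "p (vabs x) = p x"
  using assms by (intro antisym) (simp_all add: lattice_seminorm_def)

lemma lattice_seminorm_le_add_of_vabs_le:
  assumes p: "lattice_seminorm p" and le: "vabs x \<le> vabs a + vabs b"
  shows "p x \<le> p a + p b"
proof -
  have "vabs (vabs a + vabs b) = vabs a + vabs b"
    by (intro vabs_of_nonneg add_nonneg_nonneg vabs_nonneg)
  then have "p x \<le> p (vabs a + vabs b)"
    using p le by (simp add: lattice_seminorm_def)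
  also have "\<dots> \<le> p (vabs a) + p (vabs b)"
    using p by (simp add: lattice_seminorm_def seminorm_def)
  finally show ?thesis
    using p by (simp add: lattice_seminorm_vabs)
qed

lemma K_convexD:
  assumes "K_convex X K S" and "t \<ge> 0" and "u \<in> X" and "v \<in> X" and "0 \<le> lam" and "lam \<le> 1"
  shows "S t (lam *\<^sub>R u + (1 - lam) *\<^sub>R v) \<le> lam *\<^sub>R S t u + (1 - lam) *\<^sub>R K t v"
  using assms unfolding K_convex_def by blast

lemma K_convex_le:
  assumes "K_convex X K S" and "t \<ge> 0" and "u \<in> X"
  shows "S t u \<le> K t u"
  using K_convexD[OF assms assms(3), of 0] by simp

lemma K_convex_neg_le:
  assumes "K_convex X K S" and "subspace X" and "t \<ge> 0" and "u \<in> X" and "0 \<le> S t 0"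
  shows "- S t u \<le> K t (- u)"
proof -
  have "S t ((1/2::real) *\<^sub>R u + (1 - 1/2) *\<^sub>R (- u))
          \<le> (1/2::real) *\<^sub>R S t u + (1 - 1/2) *\<^sub>R K t (- u)"
    using K_convexD[OF assms(1,3,4) subspace_neg[OF assms(2,4)], of "1/2"] by simp
  then have "0 \<le> (1/2::real) *\<^sub>R (S t u + K t (- u))"
    using assms(5) by (simp add: scaleR_right_distrib)
  then have "0 \<le> S t u + K t (- u)"
    by (simp add: zero_le_scaleR_iff)
  then show ?thesis
    using add_left_mono[of 0 "S t u + K t (- u)" "- S t u"] by simp
qed

theorem lemma2p5:
  fixes X :: "'y::{ordered_real_vector,lattice} set"
    and S K :: "real \<Rightarrow> 'y \<Rightarrow> 'y"
  assumes "sublattice X"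
    and "monotone_semigroup X S"
    and "K_convex X K S"
    and "\<forall>t\<ge>0. 0 \<le> S t 0"
  shows "(\<forall>t\<ge>0. \<forall>u\<in>X. \<forall>v\<in>X.
            vabs (S t u - v) \<le> vabs (K t u - v) + vabs (K t (- u) + v))
       \<and> (\<forall>p. lattice_seminorm p \<longrightarrow> (\<forall>t\<ge>0. \<forall>u\<in>X. \<forall>v\<in>X.
            p (S t u - v) \<le> p (K t u - v) + p (K t (- u) + v)))"
proof -
  have subspace: "subspace X"
    using assms(1) by (simp add: sublattice_def)
  have vabs_bound: "vabs (S t u - v) \<le> vabs (K t u - v) + vabs (K t (- u) + v)"
    if t: "t \<ge> 0" and u: "u \<in> X" for t u v
  proof (rule vabs_diff_le_of_bounds)
    show "S t u \<le> K t u"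
      using assms(3) t u by (rule K_convex_le)
    show "- S t u \<le> K t (- u)"
      using assms(3) subspace t u assms(4) by (simp add: K_convex_neg_le)
  qed
  moreover have "p (S t u - v) \<le> p (K t u - v) + p (K t (- u) + v)"
    if "lattice_seminorm p" and "t \<ge> 0" and "u \<in> X" for p t u v
    using that by (simp add: vabs_bound lattice_seminorm_le_add_of_vabs_le)
  ultimately show ?thesis
    by blast
qed

end
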